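(* Let $n\ge1$ and $F:\mathbb{F}_{2^n}\to\mathbb{F}_{2^n}$ any function. Then $F$ is an o-polynomial if and only if both $$\sum_{b\in\mathbb{F}_{2^n}^*}\sum_{v\in\mathbb{F}_{2^n}} W_F^2(bv,v) = (2^n-1)2^{2n+1}$$ and $$\sum_{b\in \mathbb{F}_{2^n}^*}\ \sum_{v_1,v_2\in \mathbb{F}_{2^n}}W_F(bv_1,v_1)W_F(bv_2,v_2)W_F(b(v_1+v_2),v_1+v_2)=(2^n-1)2^{3n+2}$$ hold.
   Context: $tr_n$ denotes the absolute trace from $\mathbb{F}_{2^n}$ to $\mathbb{F}_2$, $\mathbb{F}_{2^n}^*=\mathbb{F}_{2^n}\setminus\{0\}$, and $W_F(u,v)=\sum_{x\in\mathbb{F}_{2^n}}(-1)^{tr_n(vF(x))+tr_n(ux)}$. In $PG(2,2^n)$, a hyperoval is a set of $2^n+2$ points no three of which lie on a common line. A function (polynomial) $F$ over $\mathbb{F}_{2^n}$ is an o-polynomial if $\{(1,t,F(t)) : t\in\mathbb{F}_{2^n}\}\cup\{(0,1,0),(0,0,1)\}$ is a hyperoval of $PG(2,2^n)$. Equivalently (known fact), for every $a\in\mathbb{F}_{2^n}$ and $b\in\mathbb{F}_{2^n}^*$ the equation $F(x)+bx=a$ has $0$ or $2$ solutions in $\mathbb{F}_{2^n}$. *)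

theory Defs
  imports Main
begin

text \<open>The finite field GF(2^n) is modelled by a finite field type 'a with CARD('a) = 2^n
  (this forces characteristic 2).\<close>

definition tr :: "nat \<Rightarrow> 'a::field \<Rightarrow> 'a" where
  "tr n x = (\<Sum>i<n. x ^ (2 ^ i))"

definition trbit :: "nat \<Rightarrow> 'a::field \<Rightarrow> nat" where
  "trbit n x = (if tr n x = 0 then 0 else 1)"

definition walsh :: "nat \<Rightarrow> ('a::{field,finite} \<Rightarrow> 'a) \<Rightarrow> 'a \<Rightarrow> 'a \<Rightarrow> int" where
  "walsh n F u v = (\<Sum>x\<in>UNIV. (-1) ^ (trbit n (v * F x) + trbit n (u * x)))"

text \<open>Projective plane PG(2,q): points are nonzero triples up to nonzero scalars.\<close>
definition proj_point :: "'a::field \<times> 'a \<times> 'a \<Rightarrow> ('a \<times> 'a \<times> 'a) set" where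
  "proj_point p = {(c * fst p, c * fst (snd p), c * snd (snd p)) | c. c \<noteq> 0}"

definition det3 :: "'a::field \<times> 'a \<times> 'a \<Rightarrow> 'a \<times> 'a \<times> 'a \<Rightarrow> 'a \<times> 'a \<times> 'a \<Rightarrow> 'a" where
  "det3 p q r = (case p of (a1,a2,a3) \<Rightarrow> case q of (b1,b2,b3) \<Rightarrow> case r of (c1,c2,c3) \<Rightarrow>
      a1*(b2*c3 - b3*c2) - a2*(b1*c3 - b3*c1) + a3*(b1*c2 - b2*c1))"

text \<open>The set is given by representative triples.\<close>
definition hyperoval :: "('a::{field,finite} \<times> 'a \<times> 'a) set \<Rightarrow> bool" where
  "hyperoval S \<longleftrightarrow> (0,0,0) \<notin> S \<and> card (proj_point ` S) = card (UNIV :: 'a set) + 2 \<and>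
     (\<forall>p\<in>S. \<forall>q\<in>S. \<forall>r\<in>S. proj_point p \<noteq> proj_point q \<and> proj_point p \<noteq> proj_point r
        \<and> proj_point q \<noteq> proj_point r \<longrightarrow> det3 p q r \<noteq> 0)"

definition o_polynomial :: "('a::{field,finite} \<Rightarrow> 'a) \<Rightarrow> bool" where
  "o_polynomial F \<longleftrightarrow> hyperoval ((\<lambda>t. (1, t, F t)) ` UNIV \<union> {(0,1,0), (0,0,1)})"

end

(*
  For a fixed b, put m_b(x) = #{y. F y + b y = F x + b x}. Since x \<mapsto> (-1)^(tr x) is a nontrivial
  additive character of GF(2^n), orthogonality turns the inner Walsh sums for the slope b into
  2^n \<Sum>_x m_b(x) and 2^(2n) \<Sum>_x m_b(x)^2: they count pairs and triples of points of the graph of F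
  on a common line of slope b.
  Geometrically, F is an o-polynomial iff F is injective and no line of nonzero slope meets its graph
  in three points; counting the slopes of the lines through one point of the graph shows that this
  holds iff m_b(x) = 2 for all b \<noteq> 0 and all x. Finally, for integers m_i indexed by a set of size N,
  \<Sum> m_i = 2N and \<Sum> m_i^2 = 4N hold together iff \<Sum> (m_i - 2)^2 = 0, i.e. iff every m_i = 2.
*)
theory Submission
  imports Defs "HOL-Computational_Algebra.Polynomial"
begin

section \<open>Characteristic two and the trace\<close>

lemma CHAR_eq_2_if_card_eq_power_2:
  assumes "card (UNIV :: 'a::{field,finite} set) = 2 ^ n"
  shows "CHAR('a) = 2"
proof -
  have "prime CHAR('a)"
    by (simp add: finite_imp_CHAR_pos prime_CHAR_semidom)
  moreover have "(\<Sum>y\<in>UNIV. 1 + y) = (\<Sum>y\<in>UNIV. y :: 'a)"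
    by (rule sum.reindex_bij_witness[where i="\<lambda>y. y - 1" and j="\<lambda>y. 1 + y"]) auto
  then have "CHAR('a) dvd 2 ^ n"
    using assms by (simp add: sum.distrib of_nat_eq_0_iff_char_dvd[symmetric])
  ultimately have "CHAR('a) dvd 2"
    using prime_dvd_power by blast
  then have "CHAR('a) \<le> 2"
    by (rule dvd_imp_le) simp
  with \<open>prime CHAR('a)\<close> show ?thesis
    using prime_ge_2_nat[of "CHAR('a)"] by linarith
qed

lemma CHAR_2_add_eq_0_iff:
  assumes "CHAR('a::ring_1) = 2"
  shows "x + y = 0 \<longleftrightarrow> x = (y::'a)"
  using add_eq_0_iff2[of x y] uminus_CHAR_2[OF assms, of y] by simp

lemma power_card_UNIV_eq_self:
  fixes x :: "'a::{field,finite}"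
  shows "x ^ card (UNIV :: 'a set) = x"
proof (cases "x = 0")
  case False
  have "card (UNIV :: 'a set) \<noteq> 0"
    by simp
  then obtain k where k: "card (UNIV :: 'a set) = Suc k"
    using not0_implies_Suc by blast
  have "(\<Prod>y\<in>UNIV-{0}. x * y) = (\<Prod>y\<in>UNIV-{0}. y)"
    by (rule prod.reindex_bij_witness[where i="\<lambda>y. y / x" and j="\<lambda>y. x * y"]) (use False in auto)
  then have "x ^ k = 1"
    using k by (simp add: prod.distrib card_Diff_singleton)
  then show ?thesis
    using k by (simp del: power_Suc add: power_Suc2)
qed (simp add: power_0_left)

lemma tr_add:
  assumes "CHAR('a::field) = 2"
  shows "tr n (x + y) = tr n x + tr n (y::'a)"
  unfolding tr_def by (simp add: freshmans_dream' assms sum.distrib)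

lemma tr_square:
  assumes "CHAR('a::field) = 2"
  shows "tr n x ^ 2 = (\<Sum>i<n. (x::'a) ^ 2 ^ Suc i)"
proof -
  have "tr n x ^ 2 = (\<Sum>i<n. (x ^ 2 ^ i) ^ 2)"
    unfolding tr_def by (rule freshmans_dream_sum) (simp_all add: assms)
  then show ?thesis
    by (simp add: power_mult[symmetric] mult.commute)
qed

lemma tr_eq_0_or_1:
  assumes "card (UNIV :: 'a::{field,finite} set) = 2 ^ n"
  shows "tr n x = 0 \<or> tr n (x::'a) = 1"
proof -
  have "tr n x ^ 2 + x ^ 2 ^ 0 = tr n x + x ^ 2 ^ n"
    using tr_square[OF CHAR_eq_2_if_card_eq_power_2[OF assms], of n x]
      sum.lessThan_Suc_shift[of "\<lambda>i. x ^ 2 ^ i" n]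
    by (simp add: tr_def)
  then have "tr n x ^ 2 = tr n x"
    using power_card_UNIV_eq_self[of x] assms by simp
  then have "tr n x * (tr n x - 1) = 0"
    by (simp add: power2_eq_square algebra_simps)
  then show ?thesis by simp
qed

lemma tr_not_identically_0:
  assumes "card (UNIV :: 'a::{field,finite} set) = 2 ^ n"
  obtains c where "tr n (c::'a) \<noteq> 0"
proof -
  have "card {0, 1::'a} \<le> card (UNIV :: 'a set)"
    by (rule card_mono) simp_all
  then have "n \<noteq> 0"
    using assms by (cases n) simp_all
  define p :: "'a poly" where "p = (\<Sum>i<n. monom 1 (2^i))"
  have "(2::nat) ^ i = 2 ^ (n - 1) \<longleftrightarrow> i = n - 1" for i
    by simp
  then have "coeff p (2^(n-1)) = 1"
    using \<open>n \<noteq> 0\<close> by (simp add: p_def coeff_sum)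
  then have "p \<noteq> 0" by auto
  have "degree p \<le> 2^(n-1)"
    unfolding p_def by (rule degree_sum_le) (auto simp: degree_monom_eq)
  also have "\<dots> < card (UNIV :: 'a set)"
    using \<open>n \<noteq> 0\<close> assms by simp
  finally have "{x. poly p x = 0} \<noteq> UNIV"
    using card_poly_roots_bound[OF \<open>p \<noteq> 0\<close>] by auto
  then show ?thesis
    using that by (auto simp: p_def tr_def poly_sum poly_monom)
qed

section \<open>The additive character of the trace\<close>

definition tr_char :: "nat \<Rightarrow> 'a::field \<Rightarrow> int" where
  "tr_char n x = (-1) ^ trbit n x"

lemma tr_char_0 [simp]: "tr_char n (0::'a::field) = 1"
  by (simp add: tr_char_def trbit_def tr_def power_0_left)

lemma tr_char_add:
  assumes "card (UNIV :: 'a::{field,finite} set) = 2 ^ n"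
  shows "tr_char n (x + y) = tr_char n x * tr_char n (y::'a)"
proof -
  have "CHAR('a) = 2"
    using CHAR_eq_2_if_card_eq_power_2[OF assms] .
  then have "(2::'a) = 0"
    using of_nat_CHAR[where 'a='a] by simp
  then show ?thesis
    using tr_eq_0_or_1[OF assms, of x] tr_eq_0_or_1[OF assms, of y] tr_add[OF \<open>CHAR('a) = 2\<close>, of n x y]
    by (auto simp: tr_char_def trbit_def)
qed

lemma sum_tr_char:
  assumes "card (UNIV :: 'a::{field,finite} set) = 2 ^ n"
  shows "(\<Sum>v\<in>UNIV. tr_char n (v::'a)) = 0"
proof -
  obtain c :: 'a where "tr n c \<noteq> 0"
    using tr_not_identically_0[OF assms] .
  then have "tr_char n c = -1"
    using tr_eq_0_or_1[OF assms, of c] by (simp add: tr_char_def trbit_def)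
  have "(\<Sum>v\<in>UNIV. tr_char n (v::'a)) = (\<Sum>v\<in>UNIV. tr_char n (c + v))"
    by (rule sum.reindex_bij_witness[where i="\<lambda>v. v + c" and j="\<lambda>v. v - c"]) auto
  also have "\<dots> = - (\<Sum>v\<in>UNIV. tr_char n (v::'a))"
    by (simp add: tr_char_add[OF assms] \<open>tr_char n c = -1\<close> sum_negf)
  finally show ?thesis by simp
qed

lemma sum_tr_char_mult:
  assumes "card (UNIV :: 'a::{field,finite} set) = 2 ^ n"
  shows "(\<Sum>v\<in>UNIV. tr_char n (v * (d::'a))) = (if d = 0 then int (card (UNIV :: 'a set)) else 0)"
proof (cases "d = 0")
  case False
  have "(\<Sum>v\<in>UNIV. tr_char n (v * d)) = (\<Sum>v\<in>UNIV. tr_char n (v::'a))"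
    by (rule sum.reindex_bij_witness[where i="\<lambda>v. v / d" and j="\<lambda>v. v * d"]) (use False in auto)
  with False show ?thesis
    using sum_tr_char[OF assms] by simp
qed simp

lemma walsh_eq_sum_tr_char:
  assumes "card (UNIV :: 'a::{field,finite} set) = 2 ^ n"
  shows "walsh n F (b * v) v = (\<Sum>x\<in>UNIV. tr_char n (v * (F x + b * (x::'a))))"
  unfolding walsh_def
proof (rule sum.cong[OF refl])
  fix x
  have "v * (F x + b * x) = v * F x + b * v * x"
    by (simp add: algebra_simps)
  then have "tr_char n (v * (F x + b * x)) = tr_char n (v * F x) * tr_char n (b * v * x)"
    by (simp add: tr_char_add[OF assms])
  then show "(-1) ^ (trbit n (v * F x) + trbit n (b * v * x)) = tr_char n (v * (F x + b * x))"
    by (simp add: tr_char_def power_add)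
qed

lemma tr_char_mult_add:
  fixes v x y :: "'a::{field,finite}"
  assumes "card (UNIV :: 'a::{field,finite} set) = 2 ^ n"
  shows "tr_char n (v * x) * tr_char n (v * y) = tr_char n (v * (x + y))"
  by (simp add: tr_char_add[OF assms] distrib_left)

lemma sum_tr_char_mult_add:
  assumes "card (UNIV :: 'a::{field,finite} set) = 2 ^ n"
  shows "(\<Sum>v\<in>UNIV. tr_char n (v * (x + (y::'a)))) = (if x = y then int (card (UNIV :: 'a set)) else 0)"
  using CHAR_2_add_eq_0_iff[OF CHAR_eq_2_if_card_eq_power_2[OF assms], of x y]
  by (simp add: sum_tr_char_mult[OF assms])

lemma sum_tr_char_mult_sum_tr_char:
  fixes G :: "'b::finite \<Rightarrow> 'a::{field,finite}"
  assumes card: "card (UNIV :: 'a set) = 2 ^ n"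
  shows "(\<Sum>v\<in>UNIV. tr_char n (v * w) * (\<Sum>x\<in>UNIV. tr_char n (v * G x))) =
    int (card (UNIV :: 'a set)) * int (card {x. G x = w})"
proof -
  have "(\<Sum>v\<in>UNIV. tr_char n (v * w) * (\<Sum>x\<in>UNIV. tr_char n (v * G x))) =
      (\<Sum>v\<in>UNIV. \<Sum>x\<in>UNIV. tr_char n (v * (w + G x)))"
    by (simp add: sum_distrib_left tr_char_mult_add[OF card])
  also have "\<dots> = (\<Sum>x\<in>UNIV. \<Sum>v\<in>UNIV. tr_char n (v * (w + G x)))"
    by (rule sum.swap)
  also have "\<dots> = (\<Sum>x\<in>UNIV. if G x = w then int (card (UNIV :: 'a set)) else 0)"
    by (simp add: sum_tr_char_mult_add[OF card] eq_commute)
  finally show ?thesis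
    by (simp add: sum.If_cases)
qed

lemma sum_square_sum_tr_char:
  fixes G :: "'b::finite \<Rightarrow> 'a::{field,finite}"
  assumes card: "card (UNIV :: 'a set) = 2 ^ n"
  shows "(\<Sum>v\<in>UNIV. (\<Sum>x\<in>UNIV. tr_char n (v * G x))^2) =
    int (card (UNIV :: 'a set)) * (\<Sum>x\<in>UNIV. int (card {y. G y = G x}))"
proof -
  have "(\<Sum>v\<in>UNIV. (\<Sum>x\<in>UNIV. tr_char n (v * G x))^2) =
      (\<Sum>v\<in>UNIV. \<Sum>x\<in>UNIV. tr_char n (v * G x) * (\<Sum>y\<in>UNIV. tr_char n (v * G y)))"
    by (simp add: power2_eq_square sum_distrib_right)
  also have "\<dots> = (\<Sum>x\<in>UNIV. \<Sum>v\<in>UNIV. tr_char n (v * G x) * (\<Sum>y\<in>UNIV. tr_char n (v * G y)))"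
    by (rule sum.swap)
  also have "\<dots> = (\<Sum>x\<in>UNIV. int (card (UNIV :: 'a set)) * int (card {y. G y = G x}))"
    by (simp only: sum_tr_char_mult_sum_tr_char[OF card])
  finally show ?thesis
    by (simp add: sum_distrib_left)
qed

lemma sum_triple_sum_tr_char:
  fixes G :: "'b::finite \<Rightarrow> 'a::{field,finite}"
  assumes card: "card (UNIV :: 'a set) = 2 ^ n"
  defines "S \<equiv> \<lambda>v. \<Sum>x\<in>UNIV. tr_char n (v * G x)"
  shows "(\<Sum>v1\<in>UNIV. \<Sum>v2\<in>UNIV. S v1 * S v2 * S (v1 + v2)) =
    int (card (UNIV :: 'a set))^2 * (\<Sum>x\<in>UNIV. int (card {y. G y = G x})^2)"
proof -
  have "S (v1 + v2) = (\<Sum>z\<in>UNIV. tr_char n (v1 * G z) * tr_char n (v2 * G z))" for v1 v2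
    by (simp add: S_def distrib_right tr_char_add[OF card])
  then have "S v1 * S v2 * S (v1 + v2) =
      (\<Sum>z\<in>UNIV. (tr_char n (v1 * G z) * S v1) * (tr_char n (v2 * G z) * S v2))" for v1 v2
    by (simp add: sum_distrib_left mult_ac)
  then have "(\<Sum>v1\<in>UNIV. \<Sum>v2\<in>UNIV. S v1 * S v2 * S (v1 + v2)) =
      (\<Sum>v1\<in>UNIV. \<Sum>z\<in>UNIV. \<Sum>v2\<in>UNIV. (tr_char n (v1 * G z) * S v1) * (tr_char n (v2 * G z) * S v2))"
    by (simp add: sum_distrib_left sum.swap[of _ "UNIV :: 'b set"])
  also have "\<dots> = (\<Sum>z\<in>UNIV. (\<Sum>v1\<in>UNIV. tr_char n (v1 * G z) * S v1) * (\<Sum>v2\<in>UNIV. tr_char n (v2 * G z) * S v2))"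
    by (subst sum.swap) (simp add: sum_product)
  also have "\<dots> = (\<Sum>z\<in>UNIV. (int (card (UNIV :: 'a set)) * int (card {y. G y = G z}))^2)"
    unfolding S_def sum_tr_char_mult_sum_tr_char[OF card] by (simp add: power2_eq_square)
  finally show ?thesis
    by (simp add: S_def power_mult_distrib sum_distrib_left)
qed

section \<open>O-polynomials and lines meeting the graph\<close>

definition o_points :: "('a::field \<Rightarrow> 'a) \<Rightarrow> ('a \<times> 'a \<times> 'a) set" where
  "o_points F = (\<lambda>t. (1, t, F t)) ` UNIV \<union> {(0, 1, 0), (0, 0, 1)}"

definition no_three_collinear :: "('a::field \<times> 'a \<times> 'a) set \<Rightarrow> bool" where
  "no_three_collinear S \<longleftrightarrow>
     (\<forall>p\<in>S. \<forall>q\<in>S. \<forall>r\<in>S. p \<noteq> q \<and> p \<noteq> r \<and> q \<noteq> r \<longrightarrow> det3 p q r \<noteq> 0)"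

lemma proj_point_eqD:
  assumes "proj_point p = proj_point q"
  obtains c where "c \<noteq> 0" "p = (c * fst q, c * fst (snd q), c * snd (snd q))"
proof -
  have "p \<in> proj_point p"
    unfolding proj_point_def by (cases p) (auto intro!: exI[of _ 1])
  with assms that show ?thesis
    unfolding proj_point_def by auto
qed

lemma inj_on_proj_point_o_points: "inj_on proj_point (o_points F)"
proof (rule inj_onI)
  fix p q
  assume "p \<in> o_points F" "q \<in> o_points F" "proj_point p = proj_point q"
  then show "p = q"
    by (elim proj_point_eqD) (auto simp: o_points_def)
qed

lemma card_o_points: "card (o_points (F::'a::{field,finite} \<Rightarrow> 'a)) = card (UNIV :: 'a set) + 2"
proof -
  have "card ((\<lambda>t. (1::'a, t, F t)) ` UNIV) = card (UNIV :: 'a set)"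
    by (rule card_image) (auto intro: inj_onI)
  moreover have "(\<lambda>t. (1::'a, t, F t)) ` UNIV \<inter> {(0, 1, 0), (0, 0, 1)} = {}"
    by auto
  ultimately show ?thesis
    unfolding o_points_def by (simp add: card_Un_disjoint)
qed

lemma o_polynomial_iff_no_three_collinear:
  "o_polynomial (F::'a::{field,finite} \<Rightarrow> 'a) \<longleftrightarrow> no_three_collinear (o_points F)"
proof -
  have "card (proj_point ` o_points F) = card (UNIV :: 'a set) + 2"
    using card_image[OF inj_on_proj_point_o_points] card_o_points by metis
  moreover have "proj_point p = proj_point q \<longleftrightarrow> p = q" if "p \<in> o_points F" "q \<in> o_points F" for p q
    using inj_on_proj_point_o_points[of F] that by (auto dest: inj_onD)
  moreover have "(0, 0, 0) \<notin> o_points F"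
    by (auto simp: o_points_def)
  ultimately show ?thesis
    unfolding o_polynomial_def hyperoval_def no_three_collinear_def o_points_def[symmetric] by auto
qed

lemma det3_affine:
  "det3 (1, s, a) (1, t, e) (1, u, d) = (t - s) * (d - a) - (u - s) * (e - (a::'a::field))"
  by (simp add: det3_def algebra_simps)

lemma no_three_collinear_o_points_iff:
  "no_three_collinear (o_points F) \<longleftrightarrow>
     inj F \<and> (\<forall>s t u. s \<noteq> t \<and> s \<noteq> u \<and> t \<noteq> u \<longrightarrow> det3 (1, s, F s) (1, t, F t) (1, u, F u) \<noteq> 0)"
  (is "_ \<longleftrightarrow> inj F \<and> ?affine")
proof
  assume H: "no_three_collinear (o_points F)"
  have mem: "(1, s, F s) \<in> o_points F" "(0, 1, 0) \<in> o_points F" for s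
    by (auto simp: o_points_def)
  note H' = H[unfolded no_three_collinear_def, rule_format]
  have "F s \<noteq> F t" if "s \<noteq> t" for s t
  proof
    assume "F s = F t"
    then have "det3 (1, s, F s) (1, t, F t) (0, 1, 0) = 0"
      by (simp add: det3_def)
    with H'[OF mem(1) mem(1) mem(2)] that show False
      by simp
  qed
  then have "inj F"
    by (auto intro: injI)
  moreover have ?affine
    using H'[OF mem(1) mem(1) mem(1)] by simp
  ultimately show "inj F \<and> ?affine" ..
next
  assume "inj F \<and> ?affine"
  then show "no_three_collinear (o_points F)"
    unfolding no_three_collinear_def o_points_def
    by (auto simp: det3_def inj_eq)
qed

lemma det3_affine_eq_0_iff:
  fixes F :: "'a::field \<Rightarrow> 'a"
  assumes "s \<noteq> t" "s \<noteq> u"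
  shows "det3 (1, s, F s) (1, t, F t) (1, u, F u) = 0 \<longleftrightarrow>
    (\<exists>b. F t + b * t = F s + b * s \<and> F u + b * u = F s + b * s)"
proof
  assume "det3 (1, s, F s) (1, t, F t) (1, u, F u) = 0"
  then have "(t - s) * (F u - F s) = (u - s) * (F t - F s)"
    by (simp add: det3_affine)
  then have "F u + (F s - F t) / (t - s) * u = F s + (F s - F t) / (t - s) * s"
    using assms by (simp add: field_simps)
  moreover have "F t + (F s - F t) / (t - s) * t = F s + (F s - F t) / (t - s) * s"
    using assms by (simp add: field_simps)
  ultimately show "\<exists>b. F t + b * t = F s + b * s \<and> F u + b * u = F s + b * s"
    by blast
next
  assume "\<exists>b. F t + b * t = F s + b * s \<and> F u + b * u = F s + b * s"
  then obtain b where "F t - F s = - b * (t - s)" "F u - F s = - b * (u - s)"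
    by (auto simp: algebra_simps)
  then show "det3 (1, s, F s) (1, t, F t) (1, u, F u) = 0"
    by (simp add: det3_affine)
qed

text \<open>The number of points of the graph of \<open>F\<close> on the line of slope \<open>-b\<close> through \<open>(x, F x)\<close>.\<close>
definition fibre_card :: "('a::field \<Rightarrow> 'a) \<Rightarrow> 'a \<Rightarrow> 'a \<Rightarrow> nat" where
  "fibre_card F b x = card {y. F y + b * y = F x + b * x}"

lemma fibres_card_le_2_iff:
  fixes G :: "'a::finite \<Rightarrow> 'b"
  shows "(\<forall>x. card {y. G y = G x} \<le> 2) \<longleftrightarrow>
    (\<forall>s t u. s \<noteq> t \<and> s \<noteq> u \<and> t \<noteq> u \<longrightarrow> \<not> (G t = G s \<and> G u = G s))"
proof
  assume H: "\<forall>x. card {y. G y = G x} \<le> 2"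
  show "\<forall>s t u. s \<noteq> t \<and> s \<noteq> u \<and> t \<noteq> u \<longrightarrow> \<not> (G t = G s \<and> G u = G s)"
  proof (intro allI impI notI)
    fix s t u :: 'a
    assume "s \<noteq> t \<and> s \<noteq> u \<and> t \<noteq> u" "G t = G s \<and> G u = G s"
    then have "card {s, t, u} = 3" "card {s, t, u} \<le> card {y. G y = G s}"
      by (auto intro!: card_mono simp del: card.insert) auto
    moreover have "card {y. G y = G s} \<le> 2"
      using H by blast
    ultimately show False
      by linarith
  qed
next
  assume H: "\<forall>s t u. s \<noteq> t \<and> s \<noteq> u \<and> t \<noteq> u \<longrightarrow> \<not> (G t = G s \<and> G u = G s)"
  show "\<forall>x. card {y. G y = G x} \<le> 2"
  proof (rule allI, rule ccontr)
    fix x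
    assume "\<not> card {y. G y = G x} \<le> 2"
    then obtain B where "B \<subseteq> {y. G y = G x}" "card B = 3"
      using obtain_subset_with_card_n[of 3 "{y. G y = G x}"] by force
    then obtain s t u where "s \<noteq> t" "s \<noteq> u" "t \<noteq> u" "G s = G x" "G t = G x" "G u = G x"
      unfolding card_3_iff by auto
    then show False
      using H[rule_format, of s t u] by simp
  qed
qed

lemma affine_no_three_collinear_iff_fibre_card_le_2:
  fixes F :: "'a::{field,finite} \<Rightarrow> 'a"
  assumes "inj F"
  shows "(\<forall>s t u. s \<noteq> t \<and> s \<noteq> u \<and> t \<noteq> u \<longrightarrow> det3 (1, s, F s) (1, t, F t) (1, u, F u) \<noteq> 0)
    \<longleftrightarrow> (\<forall>b\<noteq>0. \<forall>x. fibre_card F b x \<le> 2)"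
proof -
  have nonzero: "b \<noteq> 0" if "F t + b * t = F s + b * s" "s \<noteq> t" for b s t
  proof
    assume "b = 0"
    with that have "t = s"
      using injD[OF assms] by simp
    with \<open>s \<noteq> t\<close> show False
      by simp
  qed
  have collinear: "det3 (1, s, F s) (1, t, F t) (1, u, F u) = 0 \<longleftrightarrow>
      (\<exists>b\<noteq>0. F t + b * t = F s + b * s \<and> F u + b * u = F s + b * s)" if "s \<noteq> t" "s \<noteq> u" for s t u
    unfolding det3_affine_eq_0_iff[OF that] using nonzero[OF _ that(1)] by blast
  have "(\<forall>s t u. s \<noteq> t \<and> s \<noteq> u \<and> t \<noteq> u \<longrightarrow> det3 (1, s, F s) (1, t, F t) (1, u, F u) \<noteq> 0)
      \<longleftrightarrow> (\<forall>b\<noteq>0. \<forall>s t u. s \<noteq> t \<and> s \<noteq> u \<and> t \<noteq> u \<longrightarrow>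
            \<not> (F t + b * t = F s + b * s \<and> F u + b * u = F s + b * s))"
    using collinear by meson
  also have "\<dots> \<longleftrightarrow> (\<forall>b\<noteq>0. \<forall>x. fibre_card F b x \<le> 2)"
    using fibres_card_le_2_iff[of "\<lambda>y. F y + _ * y"] by (simp add: fibre_card_def)
  finally show ?thesis .
qed

lemma o_polynomial_iff_inj_fibre_card_le_2:
  fixes F :: "'a::{field,finite} \<Rightarrow> 'a"
  shows "o_polynomial F \<longleftrightarrow> inj F \<and> (\<forall>b\<noteq>0. \<forall>x. fibre_card F b x \<le> 2)"
  unfolding o_polynomial_iff_no_three_collinear no_three_collinear_o_points_iff
  using affine_no_three_collinear_iff_fibre_card_le_2[of F] by blast

section \<open>Counting slopes\<close>

lemma fibre_slope:
  fixes F :: "'a::field \<Rightarrow> 'a"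
  assumes "y \<noteq> x"
  shows "F y + b * y = F x + b * x \<longleftrightarrow> b = (F y - F x) / (x - y)"
  using assms by (auto simp: field_simps)

lemma sum_fibre_card:
  fixes F :: "'a::{field,finite} \<Rightarrow> 'a"
  shows "(\<Sum>b\<in>UNIV-{0}. fibre_card F b x) = (card (UNIV :: 'a set) - 1) + card {y. y \<noteq> x \<and> F y \<noteq> F x}"
proof -
  have "(\<Sum>b\<in>UNIV-{0}. fibre_card F b x) =
      (\<Sum>b\<in>UNIV-{0}. \<Sum>y\<in>UNIV. if F y + b * y = F x + b * x then 1 else 0)"
    by (simp add: fibre_card_def sum.If_cases)
  also have "\<dots> = (\<Sum>y\<in>UNIV. card {b\<in>UNIV-{0}. F y + b * y = F x + b * x})"
    by (subst sum.swap) (simp add: sum.If_cases Int_def)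
  also have "\<dots> = (\<Sum>y\<in>UNIV. if y = x then card (UNIV :: 'a set) - 1 else if F y \<noteq> F x then 1 else 0)"
  proof (rule sum.cong[OF refl])
    fix y
    show "card {b\<in>UNIV-{0}. F y + b * y = F x + b * x} =
        (if y = x then card (UNIV :: 'a set) - 1 else if F y \<noteq> F x then 1 else 0)"
    proof (cases "y = x")
      case False
      then have "{b\<in>UNIV-{0}. F y + b * y = F x + b * x} =
          (if F y \<noteq> F x then {(F y - F x) / (x - y)} else {})"
        by (auto simp: fibre_slope)
      with False show ?thesis
        by simp
    next
      case True
      then have "{b\<in>UNIV-{0}. F y + b * y = F x + b * x} = UNIV - {0}"
        by auto
      with True show ?thesis
        by (simp add: card_Diff_singleton)
    qed
  qed
  also have "\<dots> = (card (UNIV :: 'a set) - 1) + card {y. y \<noteq> x \<and> F y \<noteq> F x}"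
    by (simp add: sum.remove[of UNIV x] sum.If_cases Int_def conj_commute)
  finally show ?thesis .
qed

lemma inj_iff_card_other_values:
  fixes F :: "'a::finite \<Rightarrow> 'b"
  shows "inj F \<longleftrightarrow> (\<forall>x. card {y. y \<noteq> x \<and> F y \<noteq> F x} = card (UNIV :: 'a set) - 1)"
proof -
  have "card {y. y \<noteq> x \<and> F y \<noteq> F x} = card (UNIV :: 'a set) - 1 \<longleftrightarrow>
      {y. y \<noteq> x \<and> F y \<noteq> F x} = UNIV - {x}" for x
  proof
    assume "card {y. y \<noteq> x \<and> F y \<noteq> F x} = card (UNIV :: 'a set) - 1"
    then show "{y. y \<noteq> x \<and> F y \<noteq> F x} = UNIV - {x}"
      by (intro card_subset_eq) (auto simp: card_Diff_singleton)
  qed (simp add: card_Diff_singleton)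
  moreover have "inj F \<longleftrightarrow> (\<forall>x. {y. y \<noteq> x \<and> F y \<noteq> F x} = UNIV - {x})"
    unfolding inj_def by auto
  ultimately show ?thesis
    by simp
qed

lemma o_polynomial_iff_fibre_card_eq_2:
  fixes F :: "'a::{field,finite} \<Rightarrow> 'a"
  shows "o_polynomial F \<longleftrightarrow> (\<forall>b\<noteq>0. \<forall>x. fibre_card F b x = 2)"
proof -
  have card_units: "card (UNIV - {0::'a}) = card (UNIV :: 'a set) - 1"
    by (simp add: card_Diff_singleton)
  show ?thesis
  proof
    assume "o_polynomial F"
    then have "inj F" and le_2: "\<And>b x. b \<noteq> 0 \<Longrightarrow> fibre_card F b x \<le> 2"
      by (auto simp: o_polynomial_iff_inj_fibre_card_le_2)
    show "\<forall>b\<noteq>0. \<forall>x. fibre_card F b x = 2"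
    proof (intro allI impI, rule ccontr)
      fix b x :: 'a
      assume "b \<noteq> 0" "fibre_card F b x \<noteq> 2"
      then have "fibre_card F b x < 2"
        using le_2[of b x] by simp
      then have "(\<Sum>c\<in>UNIV-{0}. fibre_card F c x) < (\<Sum>c\<in>UNIV-{0::'a}. 2)"
        using le_2 \<open>b \<noteq> 0\<close> by (intro sum_strict_mono_ex1) auto
      then show False
        using \<open>inj F\<close> card_units by (simp add: sum_fibre_card inj_iff_card_other_values)
    qed
  next
    assume eq_2: "\<forall>b\<noteq>0. \<forall>x. fibre_card F b x = 2"
    have "card {y. y \<noteq> x \<and> F y \<noteq> F x} = card (UNIV :: 'a set) - 1" for x
      using sum_fibre_card[of F x] eq_2 card_units by simp
    with eq_2 show "o_polynomial F"
      by (simp add: o_polynomial_iff_inj_fibre_card_le_2 inj_iff_card_other_values)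
  qed
qed

section \<open>The Walsh sums\<close>

lemma sum_square_walsh:
  fixes F :: "'a::{field,finite} \<Rightarrow> 'a"
  assumes card: "card (UNIV :: 'a set) = 2 ^ n"
  shows "(\<Sum>b\<in>UNIV - {0}. \<Sum>v\<in>UNIV. (walsh n F (b * v) v)^2) =
    2 ^ n * (\<Sum>(b, x)\<in>(UNIV - {0}) \<times> UNIV. int (fibre_card F b x))"
proof -
  have "(\<Sum>v\<in>UNIV. (walsh n F (b * v) v)^2) = 2 ^ n * (\<Sum>x\<in>UNIV. int (fibre_card F b x))" for b
    using sum_square_sum_tr_char[OF card, of "\<lambda>x. F x + b * x"]
    by (simp add: walsh_eq_sum_tr_char[OF card] fibre_card_def card)
  then show ?thesis
    by (simp add: sum.cartesian_product sum_distrib_left case_prod_unfold)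
qed

lemma sum_triple_walsh:
  fixes F :: "'a::{field,finite} \<Rightarrow> 'a"
  assumes card: "card (UNIV :: 'a set) = 2 ^ n"
  shows "(\<Sum>b\<in>UNIV - {0}. \<Sum>v1\<in>UNIV. \<Sum>v2\<in>UNIV.
      walsh n F (b * v1) v1 * walsh n F (b * v2) v2 * walsh n F (b * (v1 + v2)) (v1 + v2)) =
    (2 ^ n)^2 * (\<Sum>(b, x)\<in>(UNIV - {0}) \<times> UNIV. int (fibre_card F b x)^2)"
proof -
  have "(\<Sum>v1\<in>UNIV. \<Sum>v2\<in>UNIV.
      walsh n F (b * v1) v1 * walsh n F (b * v2) v2 * walsh n F (b * (v1 + v2)) (v1 + v2)) =
    (2 ^ n)^2 * (\<Sum>x\<in>UNIV. int (fibre_card F b x)^2)" for b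
    using sum_triple_sum_tr_char[OF card, of "\<lambda>x. F x + b * x"]
    by (simp add: walsh_eq_sum_tr_char[OF card] fibre_card_def card)
  then show ?thesis
    by (simp add: sum.cartesian_product sum_distrib_left case_prod_unfold)
qed

lemma sum_and_sum_squares_eq_iff_const:
  fixes f :: "'i \<Rightarrow> 'a::linordered_idom"
  assumes "finite I"
  shows "(\<Sum>i\<in>I. f i) = c * of_nat (card I) \<and> (\<Sum>i\<in>I. f i ^ 2) = c^2 * of_nat (card I)
    \<longleftrightarrow> (\<forall>i\<in>I. f i = c)"
proof
  assume sums: "(\<Sum>i\<in>I. f i) = c * of_nat (card I) \<and> (\<Sum>i\<in>I. f i ^ 2) = c^2 * of_nat (card I)"
  have "(\<Sum>i\<in>I. (f i - c)^2) = (\<Sum>i\<in>I. f i ^ 2) - 2 * c * (\<Sum>i\<in>I. f i) + c^2 * of_nat (card I)"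
    by (simp add: power2_diff sum.distrib sum_subtractf sum_distrib_left sum_distrib_right mult_ac)
  also have "\<dots> = 0"
    using sums by (simp add: power2_eq_square)
  finally show "\<forall>i\<in>I. f i = c"
    using assms by (simp add: sum_nonneg_eq_0_iff)
qed simp

theorem mainTheorem7:
  fixes F :: "'a::{field,finite} \<Rightarrow> 'a" and n :: nat
  assumes "n \<ge> 1" and "card (UNIV :: 'a set) = 2 ^ n"
  shows "o_polynomial F \<longleftrightarrow>
    ((\<Sum>b\<in>UNIV - {0}. \<Sum>v\<in>UNIV. (walsh n F (b * v) v) ^ 2) = (2 ^ n - 1) * 2 ^ (2 * n + 1)
     \<and> (\<Sum>b\<in>UNIV - {0}. \<Sum>v1\<in>UNIV. \<Sum>v2\<in>UNIV.
          walsh n F (b * v1) v1 * walsh n F (b * v2) v2 * walsh n F (b * (v1 + v2)) (v1 + v2))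
        = (2 ^ n - 1) * 2 ^ (3 * n + 2))"
proof -
  define I where "I = (UNIV - {0::'a}) \<times> (UNIV :: 'a set)"
  define m where "m = (\<lambda>(b, x). int (fibre_card F b x))"
  have "(1::nat) \<le> 2 ^ n"
    by simp
  then have card_I: "int (card I) = (2 ^ n - 1) * 2 ^ n"
    using assms(2) by (simp add: I_def card_cartesian_product card_Diff_singleton)
  have rhs: "(2 ^ n - 1) * 2 ^ (2 * n + 1) = 2 ^ n * (2 * int (card I))"
    "(2 ^ n - 1) * 2 ^ (3 * n + 2) = (2 ^ n)^2 * (2^2 * int (card I))"
    unfolding card_I mult_2 numeral_3_eq_3 mult_Suc power_add by (simp_all add: algebra_simps power2_eq_square)
  have "o_polynomial F \<longleftrightarrow> (\<forall>p\<in>I. m p = 2)"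
    by (auto simp: o_polynomial_iff_fibre_card_eq_2 I_def m_def)
  also have "\<dots> \<longleftrightarrow> (\<Sum>p\<in>I. m p) = 2 * int (card I) \<and> (\<Sum>p\<in>I. m p ^ 2) = 2^2 * int (card I)"
    by (rule sum_and_sum_squares_eq_iff_const[symmetric]) (simp add: I_def)
  finally show ?thesis
    unfolding sum_square_walsh[OF assms(2)] sum_triple_walsh[OF assms(2)] rhs
    by (simp add: I_def m_def case_prod_unfold)
qed

end
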